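(* Let $\mathbf{B}_1=\{S_1,C_3,S_5,S_7,\dots\}$ and $\mathbf{B}_2=\{S_1,S_3,S_5,S_7,\dots\}$. For each $n\ge1$, both $\mathcal{Y}(\mathbf{B}_1)$ and $\mathcal{Y}(\mathbf{B}_2)$ are bases of $\Gamma^n$.
   Context: For a finite simple graph $G$, $X_G$ is its chromatic symmetric function (the sum over proper colorings $\kappa$ of $\prod_v x_{\kappa(v)}$), $\omega$ is the involution on symmetric functions with $\omega(p_r)=(-1)^{r-1}p_r$, and $Y_G=(X_G+\omega(X_G))/2$. $\Gamma=\mathbb{Q}[p_1,p_3,\dots]$ and $\Gamma^n$ is its homogeneous degree-$n$ component. $OP(n)$ is the set of partitions of $n$ into odd parts. For a set $\mathbf{B}=\{G_1,G_3,G_5,\dots\}$ of graphs with $G_k$ having $k$ vertices, $\mathcal{Y}(\mathbf{B})=\{\prod_i Y_{G_{\lambda_i}} : \lambda=(\lambda_1,\lambda_2,\dots)\in OP(n)\}$. $C_3$ is the 3-cycle and $S_n$ the star tree on $n$ vertices (one internal vertex, $n-1$ leaves). *)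

theory Defs
  imports Complex_Main "HOL-Library.Multiset" "HOL-Library.Poly_Mapping" "HOL-Library.FuncSet"
begin

text \<open>Formal power series in the variables x_0, x_1, x_2, ... with rational
coefficients, represented by their coefficient function on exponent vectors
(finitely supported maps nat to nat).\<close>

type_synonym mono = "nat \<Rightarrow>\<^sub>0 nat"
type_synonym sf = "mono \<Rightarrow> rat"

definition sf_one :: sf where
  "sf_one = (\<lambda>a. if a = 0 then 1 else 0)"

definition sf_mult :: "sf \<Rightarrow> sf \<Rightarrow> sf" where
  "sf_mult f g = (\<lambda>a. \<Sum>(b, c) \<in> {(b, c). b + c = a}. f b * g c)"

definition sf_prod_list :: "sf list \<Rightarrow> sf" where
  "sf_prod_list fs = foldr sf_mult fs sf_one"

definition lincomb :: "('i \<Rightarrow> rat) \<Rightarrow> ('i \<Rightarrow> sf) \<Rightarrow> 'i set \<Rightarrow> sf" where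
  "lincomb c b I = (\<lambda>a. \<Sum>i\<in>I. c i * b i a)"

definition psum :: "nat \<Rightarrow> sf" where
  "psum r = (\<lambda>a. if (\<exists>i. a = Poly_Mapping.single i r) then 1 else 0)"

definition is_partition :: "nat multiset \<Rightarrow> bool" where
  "is_partition la \<longleftrightarrow> 0 \<notin># la"

definition psum_part :: "nat multiset \<Rightarrow> sf" where
  "psum_part la = sf_prod_list (map psum (sorted_list_of_multiset la))"

definition eps_part :: "nat multiset \<Rightarrow> rat" where
  "eps_part la = (\<Prod>r\<in>#la. (-1) ^ (r - 1))"

text \<open>The involution omega, defined through the power-sum expansion:
omega(p_r) = (-1)^(r-1) p_r, extended multiplicatively and linearly.\<close>
definition omega :: "sf \<Rightarrow> sf" where
  "omega f = (THE g. \<exists>S c. finite S \<and> (\<forall>la\<in>S. is_partition la) \<and>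
      f = lincomb c psum_part S \<and> g = lincomb (\<lambda>la. c la * eps_part la) psum_part S)"

type_synonym graph = "nat set \<times> (nat \<Rightarrow> nat \<Rightarrow> bool)"

definition proper_colouring :: "graph \<Rightarrow> (nat \<Rightarrow> nat) \<Rightarrow> bool" where
  "proper_colouring G k \<longleftrightarrow>
     (\<forall>u\<in>fst G. \<forall>v\<in>fst G. snd G u v \<longrightarrow> k u \<noteq> k v)"

definition chrom :: "graph \<Rightarrow> sf" where
  "chrom G = (\<lambda>a. of_nat (card {k \<in> fst G \<rightarrow>\<^sub>E (UNIV :: nat set).
       proper_colouring G k \<and> (\<forall>i. card {v \<in> fst G. k v = i} = Poly_Mapping.lookup a i)}))"

definition Ysf :: "graph \<Rightarrow> sf" where
  "Ysf G = (\<lambda>a. (chrom G a + omega (chrom G) a) / 2)"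

definition OP :: "nat \<Rightarrow> nat multiset set" where
  "OP n = {la. is_partition la \<and> (\<forall>r\<in>#la. odd r) \<and> sum_mset la = n}"

definition Gamma :: "nat \<Rightarrow> sf set" where
  "Gamma n = {f. \<exists>c. f = lincomb c psum_part (OP n)}"

definition Yfam :: "(nat \<Rightarrow> graph) \<Rightarrow> nat multiset \<Rightarrow> sf" where
  "Yfam B la = sf_prod_list (map (\<lambda>r. Ysf (B r)) (sorted_list_of_multiset la))"

definition is_basis_of_Gamma :: "nat \<Rightarrow> (nat multiset \<Rightarrow> sf) \<Rightarrow> bool" where
  "is_basis_of_Gamma n b \<longleftrightarrow>
     (\<forall>c. lincomb c b (OP n) = (\<lambda>_. 0) \<longrightarrow> (\<forall>la\<in>OP n. c la = 0)) \<and>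
     {f. \<exists>c. f = lincomb c b (OP n)} = Gamma n"

definition star :: "nat \<Rightarrow> graph" where
  "star k = ({0..<k}, \<lambda>u v. (u = 0 \<and> v \<noteq> 0) \<or> (v = 0 \<and> u \<noteq> 0))"

definition cycle3 :: graph where
  "cycle3 = ({0, 1, 2}, \<lambda>u v. u \<noteq> v)"

definition B1 :: "nat \<Rightarrow> graph" where
  "B1 k = (if k = 3 then cycle3 else star k)"

definition B2 :: "nat \<Rightarrow> graph" where
  "B2 k = star k"

end

theory Submission
  imports Defs
begin

text \<open>
  Everything is expanded in the power sums \<open>p\<^sub>\<lambda>\<close>. Inclusion-exclusion over the leaves gives
  \<open>X(S\<^sub>k) = \<Sum>\<^bsub>J \<subseteq> leaves\<^esub> (-1)\<^bsup>|J|\<^esup> p\<^bsub>(|J|+1, 1\<^bsup>k-1-|J|\<^esup>)\<^esub>\<close>, a combination of hooks whose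
  only one-part term is \<open>(-1)\<^bsup>k-1\<^esup> p\<^sub>k\<close>, and a direct count gives
  \<open>X(C\<^sub>3) = X(S\<^sub>3) - p\<^sub>2\<^sub>1 + p\<^sub>3\<close>. Since \<open>\<omega> p\<^sub>\<lambda> = \<epsilon>\<^sub>\<lambda> p\<^sub>\<lambda>\<close>, \<open>Y\<^sub>G\<close> keeps exactly the terms with
  \<open>\<epsilon>\<^sub>\<lambda> = 1\<close>; for hooks these are the ones with odd arm, which are odd partitions. So for odd
  \<open>r\<close>, \<open>Y(G\<^sub>r) = c p\<^sub>r + (terms with more parts)\<close> with \<open>c \<noteq> 0\<close>. This leading-term property is
  multiplicative, so the \<open>Y\<^sub>\<lambda>\<close> (\<open>\<lambda> \<in> OP(n)\<close>) are obtained from the \<open>p\<^sub>\<lambda>\<close> by a matrix that is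
  triangular with respect to the number of parts and has nonzero diagonal; as the \<open>p\<^sub>\<lambda>\<close> are
  linearly independent, the \<open>Y\<^sub>\<lambda>\<close> form a basis of \<open>\<Gamma>\<^sup>n\<close>.
\<close>

section \<open>Linear combinations\<close>

lemma lincomb_zero_extend:
  assumes "finite U" "S \<subseteq> U"
  shows "lincomb c b S = lincomb (\<lambda>i. if i \<in> S then c i else 0) b U"
proof
  fix a
  have "lincomb (\<lambda>i. if i \<in> S then c i else 0) b U a = (\<Sum>i\<in>U. if i \<in> S then c i * b i a else 0)"
    unfolding lincomb_def by (rule sum.cong) auto
  also have "\<dots> = lincomb c b S a"
    using assms sum.inter_restrict[of U "\<lambda>i. c i * b i a" S] by (simp add: Int_absorb1 lincomb_def)
  finally show "lincomb c b S a = lincomb (\<lambda>i. if i \<in> S then c i else 0) b U a" ..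
qed

lemma lincomb_add: "lincomb (\<lambda>i. c i + d i) b U = (\<lambda>a. lincomb c b U a + lincomb d b U a)"
  unfolding lincomb_def by (auto simp: algebra_simps sum.distrib)

lemma lincomb_diff: "lincomb (\<lambda>i. c i - d i) b U = (\<lambda>a. lincomb c b U a - lincomb d b U a)"
  unfolding lincomb_def by (auto simp: algebra_simps sum_subtractf)

lemma lincomb_indicator:
  assumes "finite U" "i0 \<in> U"
  shows "lincomb (\<lambda>i. of_bool (i = i0)) b U = b i0"
  using assms by (simp add: lincomb_def fun_eq_iff if_distrib[of "\<lambda>x. x * _"] cong: if_cong)

lemma lincomb_group:
  assumes "finite A" "finite U" "g ` A \<subseteq> U"
  shows "(\<lambda>a. \<Sum>J\<in>A. d J * b (g J) a) = lincomb (\<lambda>mu. \<Sum>J\<in>{J\<in>A. g J = mu}. d J) b U"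
proof
  fix a
  have "lincomb (\<lambda>mu. \<Sum>J\<in>{J\<in>A. g J = mu}. d J) b U a
      = (\<Sum>mu\<in>U. \<Sum>J\<in>{J\<in>A. g J = mu}. d J * b (g J) a)"
    unfolding lincomb_def by (simp add: sum_distrib_right)
  also have "\<dots> = (\<Sum>J\<in>A. d J * b (g J) a)"
    using assms by (rule sum.group)
  finally show "(\<Sum>J\<in>A. d J * b (g J) a) = lincomb (\<lambda>mu. \<Sum>J\<in>{J\<in>A. g J = mu}. d J) b U a" ..
qed

lemma lincomb_change_of_basis:
  assumes "finite P" "\<forall>i\<in>P. b i = lincomb (M i) e P"
  shows "lincomb c b P = lincomb (\<lambda>j. \<Sum>i\<in>P. c i * M i j) e P"
proof
  fix a
  have "lincomb c b P a = (\<Sum>i\<in>P. \<Sum>j\<in>P. c i * M i j * e j a)"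
    using assms(2) by (simp add: lincomb_def sum_distrib_left mult.assoc)
  also have "\<dots> = lincomb (\<lambda>j. \<Sum>i\<in>P. c i * M i j) e P a"
    by (subst sum.swap) (simp add: lincomb_def sum_distrib_right)
  finally show "lincomb c b P a = lincomb (\<lambda>j. \<Sum>i\<in>P. c i * M i j) e P a" .
qed

lemma sf_mult_lincomb:
  assumes "finite T" "finite U"
  shows "sf_mult (lincomb d b T) (lincomb e b' U)
    = (\<lambda>a. \<Sum>x\<in>T. \<Sum>y\<in>U. d x * e y * sf_mult (b x) (b' y) a)"
proof
  fix a :: mono
  let ?D = "{(p, q). p + q = a}"
  have "sf_mult (lincomb d b T) (lincomb e b' U) a
      = (\<Sum>(p, q)\<in>?D. \<Sum>x\<in>T. \<Sum>y\<in>U. d x * e y * (b x p * b' y q))"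
    by (simp add: sf_mult_def lincomb_def sum_product algebra_simps)
  also have "\<dots> = (\<Sum>x\<in>T. \<Sum>(p, q)\<in>?D. \<Sum>y\<in>U. d x * e y * (b x p * b' y q))"
    by (subst sum.swap) (simp add: case_prod_beta)
  also have "\<dots> = (\<Sum>x\<in>T. \<Sum>y\<in>U. \<Sum>(p, q)\<in>?D. d x * e y * (b x p * b' y q))"
    by (rule sum.cong[OF refl]) (subst sum.swap, simp add: case_prod_beta)
  also have "\<dots> = (\<Sum>x\<in>T. \<Sum>y\<in>U. d x * e y * sf_mult (b x) (b' y) a)"
    by (simp add: sf_mult_def sum_distrib_left case_prod_beta)
  finally show "sf_mult (lincomb d b T) (lincomb e b' U) a
      = (\<Sum>x\<in>T. \<Sum>y\<in>U. d x * e y * sf_mult (b x) (b' y) a)" .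
qed

definition lin_independent :: "('i \<Rightarrow> sf) \<Rightarrow> 'i set \<Rightarrow> bool" where
  "lin_independent b I \<longleftrightarrow> (\<forall>c. lincomb c b I = (\<lambda>_. 0) \<longrightarrow> (\<forall>i\<in>I. c i = 0))"

definition lin_span :: "('i \<Rightarrow> sf) \<Rightarrow> 'i set \<Rightarrow> sf set" where
  "lin_span b I = {f. \<exists>c. f = lincomb c b I}"

lemma zero_in_lin_span: "(\<lambda>_. 0) \<in> lin_span b I"
  unfolding lin_span_def by (intro CollectI exI[of _ "\<lambda>_. 0"]) (simp add: lincomb_def fun_eq_iff)

lemma add_in_lin_span:
  assumes "f \<in> lin_span b I" "g \<in> lin_span b I"
  shows "(\<lambda>a. f a + g a) \<in> lin_span b I"
proof -
  obtain c d where "f = lincomb c b I" "g = lincomb d b I"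
    using assms by (auto simp: lin_span_def)
  then show ?thesis
    unfolding lin_span_def by (intro CollectI exI[of _ "\<lambda>i. c i + d i"]) (simp add: lincomb_add)
qed

lemma scale_in_lin_span:
  assumes "f \<in> lin_span b I"
  shows "(\<lambda>a. r * f a) \<in> lin_span b I"
proof -
  obtain c where "f = lincomb c b I"
    using assms by (auto simp: lin_span_def)
  then show ?thesis
    unfolding lin_span_def
    by (intro CollectI exI[of _ "\<lambda>i. r * c i"]) (simp add: lincomb_def sum_distrib_left mult.assoc)
qed

lemma lincomb_in_lin_span:
  assumes "finite J" "\<forall>j\<in>J. f j \<in> lin_span b I"
  shows "lincomb c f J \<in> lin_span b I"
  using assms
proof (induction J rule: finite_induct)
  case empty
  then show ?case using zero_in_lin_span by (simp add: lincomb_def)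
next
  case (insert j J)
  have "lincomb c f (insert j J) = (\<lambda>a. c j * f j a + lincomb c f J a)"
    using insert.hyps by (simp add: lincomb_def fun_eq_iff)
  then show ?case
    using insert by (simp add: add_in_lin_span scale_in_lin_span)
qed

lemma in_lin_span:
  assumes "finite I" "i \<in> I"
  shows "b i \<in> lin_span b I"
  unfolding lin_span_def using lincomb_indicator[OF assms, of b, symmetric] by blast

lemma lin_span_subset:
  assumes "finite I" "\<forall>i\<in>I. b i \<in> lin_span e J"
  shows "lin_span b I \<subseteq> lin_span e J"
  using lincomb_in_lin_span[OF assms] by (auto simp: lin_span_def)

lemma ex_max_rank:
  fixes r :: "'a \<Rightarrow> nat"
  assumes "finite S" "S \<noteq> {}"
  shows "\<exists>x\<in>S. \<forall>y\<in>S. r y \<le> r x"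
proof -
  have "Max (r ` S) \<in> r ` S"
    using assms by simp
  then obtain x where x: "x \<in> S" "r x = Max (r ` S)"
    by auto
  have "\<forall>y\<in>S. r y \<le> r x"
    using assms x by simp
  with x show ?thesis by blast
qed

lemma ex_min_rank:
  fixes r :: "'a \<Rightarrow> nat"
  assumes "finite S" "S \<noteq> {}"
  shows "\<exists>x\<in>S. \<forall>y\<in>S. r x \<le> r y"
proof -
  have "Min (r ` S) \<in> r ` S"
    using assms by simp
  then obtain x where x: "x \<in> S" "r x = Min (r ` S)"
    by auto
  have "\<forall>y\<in>S. r x \<le> r y"
    using assms x by simp
  with x show ?thesis by blast
qed

lemma triangular_lin_independent:
  fixes rank :: "'i \<Rightarrow> nat"
  assumes fin: "finite P" and indep: "lin_independent e P"
    and b: "\<forall>i\<in>P. b i = lincomb (M i) e P" and diag: "\<forall>i\<in>P. M i i \<noteq> 0"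
    and upper: "\<forall>i\<in>P. \<forall>j\<in>P. M i j \<noteq> 0 \<longrightarrow> j = i \<or> rank i < rank j"
  shows "lin_independent b P"
  unfolding lin_independent_def
proof (intro allI impI, rule ccontr)
  fix c assume zero: "lincomb c b P = (\<lambda>_. 0)" and "\<not> (\<forall>i\<in>P. c i = 0)"
  then have "{i\<in>P. c i \<noteq> 0} \<noteq> {}" by blast
  then obtain i0 where i0: "i0 \<in> {i\<in>P. c i \<noteq> 0}"
    and lowest: "\<forall>i\<in>{i\<in>P. c i \<noteq> 0}. rank i0 \<le> rank i"
    using ex_min_rank[of "{i\<in>P. c i \<noteq> 0}" rank] fin by auto
  have columns: "\<forall>j\<in>P. (\<Sum>i\<in>P. c i * M i j) = 0"
    using indep zero lincomb_change_of_basis[OF fin b, of c] unfolding lin_independent_def by metis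
  have others: "c i * M i i0 = 0" if "i \<in> P - {i0}" for i
    using that i0 lowest upper by (metis (mono_tags, lifting) DiffE mem_Collect_eq mult_eq_0_iff
        not_le singletonI)
  have "(\<Sum>i\<in>P. c i * M i i0) = c i0 * M i0 i0 + (\<Sum>i\<in>P - {i0}. c i * M i i0)"
    using fin i0 by (intro sum.remove) simp_all
  also have "(\<Sum>i\<in>P - {i0}. c i * M i i0) = 0"
    using others by (intro sum.neutral) blast
  finally have "(\<Sum>i\<in>P. c i * M i i0) = c i0 * M i0 i0"
    by simp
  then show False
    using columns i0 diag by simp
qed

lemma triangular_lin_span:
  fixes rank :: "'i \<Rightarrow> nat"
  assumes fin: "finite P"
    and b: "\<forall>i\<in>P. b i = lincomb (M i) e P" and diag: "\<forall>i\<in>P. M i i \<noteq> 0"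
    and upper: "\<forall>i\<in>P. \<forall>j\<in>P. M i j \<noteq> 0 \<longrightarrow> j = i \<or> rank i < rank j"
  shows "lin_span e P \<subseteq> lin_span b P"
proof (rule lin_span_subset[OF fin], rule ballI)
  define N where "N = Max (rank ` P)"
  fix i assume "i \<in> P"
  then show "e i \<in> lin_span b P"
  proof (induction i rule: measure_induct_rule[where f = "\<lambda>i. N - rank i"])
    case (less i)
    let ?J = "{j\<in>P - {i}. M i j \<noteq> 0}"
    have "e j \<in> lin_span b P" if "j \<in> ?J" for j
    proof (rule less.IH)
      have "rank i < rank j" "rank j \<le> N"
        using that less.prems upper fin by (auto simp: N_def)
      then show "N - rank j < N - rank i" by simp
    qed (use that in auto)
    then have rest: "lincomb (M i) e ?J \<in> lin_span b P"
      using fin by (intro lincomb_in_lin_span) auto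
    have "b i = (\<lambda>a. M i i * e i a + lincomb (M i) e ?J a)"
    proof
      fix a
      have "b i a = M i i * e i a + (\<Sum>j\<in>P - {i}. M i j * e j a)"
        using b less.prems fin by (simp add: lincomb_def sum.remove)
      also have "(\<Sum>j\<in>P - {i}. M i j * e j a) = lincomb (M i) e ?J a"
        unfolding lincomb_def using fin by (intro sum.mono_neutral_right) auto
      finally show "b i a = M i i * e i a + lincomb (M i) e ?J a" .
    qed
    then have "e i = (\<lambda>a. (1 / M i i) * b i a + (- 1 / M i i) * lincomb (M i) e ?J a)"
      using diag less.prems by (auto simp: fun_eq_iff field_simps)
    moreover have "(\<lambda>a. (1 / M i i) * b i a) \<in> lin_span b P"
      using in_lin_span[OF fin less.prems] by (rule scale_in_lin_span)
    moreover have "(\<lambda>a. (- 1 / M i i) * lincomb (M i) e ?J a) \<in> lin_span b P"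
      using rest by (rule scale_in_lin_span)
    ultimately show ?case
      by (simp only: add_in_lin_span)
  qed
qed

section \<open>Power sums as generating functions of weighted colourings\<close>

lemma finite_dominated_monomials:
  "finite {b :: mono. \<forall>i. Poly_Mapping.lookup b i \<le> Poly_Mapping.lookup a i}"
proof -
  let ?B = "{b :: mono. \<forall>i. Poly_Mapping.lookup b i \<le> Poly_Mapping.lookup a i}"
  let ?r = "\<lambda>b. restrict (Poly_Mapping.lookup b) (Poly_Mapping.keys a)"
  have "inj_on ?r ?B"
  proof (rule inj_onI, rule poly_mapping_eqI)
    fix x y k assume x: "x \<in> ?B" and y: "y \<in> ?B" and eq: "?r x = ?r y"
    show "Poly_Mapping.lookup x k = Poly_Mapping.lookup y k"
    proof (cases "k \<in> Poly_Mapping.keys a")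
      case True
      then show ?thesis using eq by (metis restrict_apply')
    next
      case False
      then have "Poly_Mapping.lookup a k = 0" by (simp add: in_keys_iff)
      then show ?thesis using x y by (metis (mono_tags, lifting) le_zero_eq mem_Collect_eq)
    qed
  qed
  moreover have "?r ` ?B \<subseteq> PiE (Poly_Mapping.keys a) (\<lambda>i. {0..Poly_Mapping.lookup a i})"
    by auto
  moreover have "finite (PiE (Poly_Mapping.keys a) (\<lambda>i. {0..Poly_Mapping.lookup a i}))"
    by (intro finite_PiE) auto
  ultimately show ?thesis by (meson finite_imageD finite_subset)
qed

lemma finite_monomial_splittings: "finite {(b, c). b + c = (a :: mono)}"
proof -
  have "fst ` {(b, c). b + c = a} \<subseteq> {b. \<forall>i. Poly_Mapping.lookup b i \<le> Poly_Mapping.lookup a i}"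
    by (auto simp: lookup_add)
  moreover have "inj_on fst {(b, c). b + c = a}"
    by (rule inj_onI) auto
  ultimately show ?thesis
    using finite_dominated_monomials by (meson finite_imageD finite_subset)
qed

definition weight_monomial :: "nat set \<Rightarrow> (nat \<Rightarrow> nat) \<Rightarrow> (nat \<Rightarrow> nat) \<Rightarrow> mono" where
  "weight_monomial V w f = (\<Sum>u\<in>V. Poly_Mapping.single (f u) (w u))"

definition weighted_colourings :: "nat set \<Rightarrow> (nat \<Rightarrow> nat) \<Rightarrow> mono \<Rightarrow> (nat \<Rightarrow> nat) set" where
  "weighted_colourings V w a = {f \<in> V \<rightarrow>\<^sub>E UNIV. weight_monomial V w f = a}"

text \<open>Counting the colourings \<open>f\<close> of \<open>V\<close> by the monomial \<open>\<Prod>u\<in>V. x\<^bsub>f u\<^esub>\<^bsup>w u\<^esup>\<close> gives the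
  power sum \<open>p\<^sub>\<lambda>\<close> of the multiset \<open>\<lambda>\<close> of weights. In this form \<open>p\<^bsub>\<lambda>+\<mu>\<^esub> = p\<^sub>\<lambda> p\<^sub>\<mu>\<close> is just
  the splitting of \<open>V\<close>, and no commutativity of \<open>sf_mult\<close> is needed to reorder the
  product defining \<open>psum_part\<close>.\<close>

definition colouring_sf :: "nat set \<Rightarrow> (nat \<Rightarrow> nat) \<Rightarrow> sf" where
  "colouring_sf V w = (\<lambda>a. of_nat (card (weighted_colourings V w a)))"

lemma lookup_weight_monomial:
  "Poly_Mapping.lookup (weight_monomial V w f) j = (\<Sum>u\<in>V. if f u = j then w u else 0)"
  unfolding weight_monomial_def lookup_sum by (simp add: lookup_single when_def)

lemma weight_monomial_cong:
  "(\<And>u. u \<in> V \<Longrightarrow> f u = g u) \<Longrightarrow> (\<And>u. u \<in> V \<Longrightarrow> w u = w' u) \<Longrightarrow>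
    weight_monomial V w f = weight_monomial V w' g"
  unfolding weight_monomial_def by (rule sum.cong) auto

lemma weight_monomial_restrict [simp]: "weight_monomial V w (restrict f V) = weight_monomial V w f"
  by (rule weight_monomial_cong) auto

lemma weight_monomial_union:
  "finite V1 \<Longrightarrow> finite V2 \<Longrightarrow> V1 \<inter> V2 = {} \<Longrightarrow>
    weight_monomial (V1 \<union> V2) w f = weight_monomial V1 w f + weight_monomial V2 w f"
  unfolding weight_monomial_def by (rule sum.union_disjoint)

lemma keys_weight_monomial:
  assumes "finite V" "\<forall>u\<in>V. 0 < w u"
  shows "Poly_Mapping.keys (weight_monomial V w f) = f ` V"
proof (intro set_eqI)
  fix j
  have "j \<in> Poly_Mapping.keys (weight_monomial V w f) \<longleftrightarrow> (\<exists>u\<in>V. (if f u = j then w u else 0) \<noteq> 0)"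
    unfolding in_keys_iff lookup_weight_monomial using assms(1) by simp
  also have "\<dots> \<longleftrightarrow> j \<in> f ` V"
    using assms(2) by force
  finally show "j \<in> Poly_Mapping.keys (weight_monomial V w f) \<longleftrightarrow> j \<in> f ` V" .
qed

lemma lookup_weight_monomial_inj:
  assumes "finite V" "inj_on f V" "u \<in> V"
  shows "Poly_Mapping.lookup (weight_monomial V w f) (f u) = w u"
proof -
  have "(\<Sum>u'\<in>V. if f u' = f u then w u' else 0) = (\<Sum>u'\<in>V. if u' = u then w u' else 0)"
    using assms by (intro sum.cong) (auto dest: inj_onD)
  then show ?thesis using assms by (simp add: lookup_weight_monomial)
qed

lemma finite_weighted_colourings:
  assumes "finite V" "\<forall>u\<in>V. 0 < w u"
  shows "finite (weighted_colourings V w a)"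
proof -
  have "weighted_colourings V w a \<subseteq> V \<rightarrow>\<^sub>E Poly_Mapping.keys a"
    using keys_weight_monomial[OF assms] by (auto simp: weighted_colourings_def)
  then show ?thesis by (rule finite_subset) (simp add: assms finite_PiE)
qed

lemma colouring_sf_empty: "colouring_sf {} w = sf_one"
proof
  fix a
  have "weighted_colourings {} w a = (if a = 0 then {\<lambda>_. undefined} else {})"
    by (auto simp: weighted_colourings_def weight_monomial_def)
  then show "colouring_sf {} w a = sf_one a"
    by (simp add: colouring_sf_def sf_one_def)
qed

lemma colouring_sf_singleton:
  assumes "0 < w v"
  shows "colouring_sf {v} w = psum (w v)"
proof
  fix a
  show "colouring_sf {v} w a = psum (w v) a"
  proof (cases "\<exists>i. a = Poly_Mapping.single i (w v)")
    case True
    then obtain i where i: "a = Poly_Mapping.single i (w v)" by blast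
    have "weighted_colourings {v} w a = {(\<lambda>_. undefined)(v := i)}"
    proof (intro equalityI subsetI)
      fix f assume f: "f \<in> weighted_colourings {v} w a"
      then have "Poly_Mapping.single (f v) (w v) = Poly_Mapping.single i (w v)"
        by (simp add: weighted_colourings_def weight_monomial_def i)
      then have "f v = i"
        using assms by (metis lookup_single_eq lookup_single_not_eq less_not_refl)
      then show "f \<in> {(\<lambda>_. undefined)(v := i)}"
        using f by (auto simp: weighted_colourings_def PiE_def extensional_def)
    qed (auto simp: weighted_colourings_def weight_monomial_def PiE_def extensional_def i)
    then show ?thesis using True by (simp add: colouring_sf_def psum_def)
  next
    case False
    then have "weighted_colourings {v} w a = {}"
      by (auto simp: weighted_colourings_def weight_monomial_def)
    then show ?thesis using False by (simp add: colouring_sf_def psum_def)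
  qed
qed

lemma bij_betw_weighted_colourings_union:
  assumes fin: "finite V1" "finite V2" and disj: "V1 \<inter> V2 = {}"
  shows "bij_betw (\<lambda>f. ((weight_monomial V1 w f, weight_monomial V2 w f), restrict f V1, restrict f V2))
    (weighted_colourings (V1 \<union> V2) w a)
    (SIGMA p:{(b, c). b + c = a}. weighted_colourings V1 w (fst p) \<times> weighted_colourings V2 w (snd p))"
    (is "bij_betw ?cut ?A ?T")
proof -
  let ?C = "weighted_colourings"
  define glue where "glue q = (\<lambda>u. if u \<in> V1 then fst (snd q) u else if u \<in> V2 then snd (snd q) u
      else undefined)" for q :: "(mono \<times> mono) \<times> (nat \<Rightarrow> nat) \<times> (nat \<Rightarrow> nat)"
  have glue_weights: "weight_monomial V1 w (glue q) = weight_monomial V1 w (fst (snd q))"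
    "weight_monomial V2 w (glue q) = weight_monomial V2 w (snd (snd q))" for q
    using disj by (auto simp: glue_def intro!: weight_monomial_cong)
  show ?thesis
  proof (rule bij_betw_byWitness[where f' = glue])
    show "\<forall>f\<in>?A. glue (?cut f) = f"
      by (auto simp: glue_def weighted_colourings_def PiE_def extensional_def fun_eq_iff)
    show "\<forall>q\<in>?T. ?cut (glue q) = q"
      using disj by (auto simp: glue_weights weighted_colourings_def)
        (auto simp: glue_def PiE_def extensional_def fun_eq_iff)
    show "?cut ` ?A \<subseteq> ?T"
      using weight_monomial_union[OF fin disj] by (auto simp: weighted_colourings_def)
    show "glue ` ?T \<subseteq> ?A"
      using weight_monomial_union[OF fin disj]
      by (auto simp: glue_weights weighted_colourings_def) (auto simp: glue_def)
  qed
qed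

lemma colouring_sf_union:
  assumes fin: "finite V1" "finite V2" and disj: "V1 \<inter> V2 = {}"
    and pos: "\<forall>u\<in>V1 \<union> V2. 0 < w u"
  shows "colouring_sf (V1 \<union> V2) w = sf_mult (colouring_sf V1 w) (colouring_sf V2 w)"
proof
  fix a :: mono
  let ?C = "weighted_colourings"
  let ?D = "{(b, c). b + c = a}"
  have "card (?C (V1 \<union> V2) w a) = card (SIGMA p:?D. ?C V1 w (fst p) \<times> ?C V2 w (snd p))"
    using bij_betw_weighted_colourings_union[OF fin disj] by (rule bij_betw_same_card)
  also have "\<dots> = (\<Sum>p\<in>?D. card (?C V1 w (fst p)) * card (?C V2 w (snd p)))"
    using finite_monomial_splittings finite_weighted_colourings fin pos
    by (subst card_SigmaI) (auto simp: card_cartesian_product)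
  finally show "colouring_sf (V1 \<union> V2) w a = sf_mult (colouring_sf V1 w) (colouring_sf V2 w) a"
    by (simp add: colouring_sf_def sf_mult_def case_prod_beta)
qed

lemma colouring_sf_insert:
  assumes "finite V" "v \<notin> V" "\<forall>u\<in>insert v V. 0 < w u"
  shows "colouring_sf (insert v V) w = sf_mult (psum (w v)) (colouring_sf V w)"
  using colouring_sf_union[of "{v}" V w] colouring_sf_singleton[of w v] assms by simp

lemma sf_prod_list_psum_eq_colouring_sf:
  assumes "finite V" "image_mset w (mset_set V) = mset xs" "0 \<notin> set xs"
  shows "sf_prod_list (map psum xs) = colouring_sf V w"
  using assms
proof (induction xs arbitrary: V)
  case Nil
  then show ?case by (simp add: sf_prod_list_def colouring_sf_empty mset_set_empty_iff)
next
  case (Cons x xs)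
  have weights: "w ` V = set (x # xs)"
    using Cons.prems(1,2) by (metis finite_set_mset_mset_set set_image_mset set_mset_mset)
  then obtain v where v: "v \<in> V" "w v = x"
    by (metis imageE list.set_intros(1))
  have pos: "\<forall>u\<in>V. 0 < w u"
    using weights Cons.prems(3) by (auto intro!: gr0I)
  have "image_mset w (mset_set (V - {v})) = mset xs"
    using Cons.prems v by (simp add: mset_set.remove)
  then have "sf_prod_list (map psum xs) = colouring_sf (V - {v}) w"
    using Cons.prems by (intro Cons.IH) auto
  moreover have "colouring_sf V w = sf_mult (psum x) (colouring_sf (V - {v}) w)"
    using colouring_sf_insert[of "V - {v}" v w] Cons.prems(1) v pos by (simp add: insert_absorb)
  ultimately show ?case by (simp add: sf_prod_list_def)
qed

lemma psum_part_eq_colouring_sf: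
  assumes "finite V" "is_partition (image_mset w (mset_set V))"
  shows "psum_part (image_mset w (mset_set V)) = colouring_sf V w"
  unfolding psum_part_def using assms
  by (intro sf_prod_list_psum_eq_colouring_sf) (auto simp: is_partition_def)

lemma image_mset_nth_sorted_list_of_multiset:
  "image_mset (nth (sorted_list_of_multiset M)) (mset_set {..<size M}) = M"
proof -
  let ?xs = "sorted_list_of_multiset M"
  have "M = mset (map (nth ?xs) [0..<length ?xs])"
    by (simp add: map_nth)
  also have "\<dots> = image_mset (nth ?xs) (mset [0..<length ?xs])"
    by simp
  also have "mset [0..<length ?xs] = mset_set {..<size M}"
    by (metis lessThan_atLeast0 mset_sorted_list_of_multiset mset_upt size_mset)
  finally show ?thesis by simp
qed

lemma ex_weights_image_mset:
  fixes M :: "nat multiset"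
  assumes "finite V" "card V = size M"
  obtains w where "image_mset w (mset_set V) = M"
proof -
  obtain g where g: "bij_betw g V {..<size M}"
    using ex_bij_betw_finite_nat[OF assms(1)] assms(2) by (auto simp: lessThan_atLeast0)
  have "image_mset (nth (sorted_list_of_multiset M) \<circ> g) (mset_set V) = M"
    using g by (simp flip: image_mset.compositionality
        add: image_mset_mset_set bij_betw_def image_mset_nth_sorted_list_of_multiset)
  then show ?thesis by (rule that)
qed

lemma psum_part_add:
  assumes "is_partition mu" "is_partition nu"
  shows "psum_part (mu + nu) = sf_mult (psum_part mu) (psum_part nu)"
proof -
  define V1 where "V1 = {..<size mu}"
  define V2 where "V2 = {size mu..<size mu + size nu}"
  obtain w1 where w1: "image_mset w1 (mset_set V1) = mu"
    by (rule ex_weights_image_mset[of V1 mu]) (auto simp: V1_def)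
  obtain w2 where w2: "image_mset w2 (mset_set V2) = nu"
    by (rule ex_weights_image_mset[of V2 nu]) (auto simp: V2_def)
  define w where "w u = (if u \<in> V1 then w1 u else w2 u)" for u
  have fin: "finite V1" "finite V2" and disj: "V1 \<inter> V2 = {}"
    by (auto simp: V1_def V2_def)
  have mu: "image_mset w (mset_set V1) = mu" and nu: "image_mset w (mset_set V2) = nu"
    using w1 w2 fin disj by (auto simp: w_def intro!: image_mset_cong)
  have "image_mset w (mset_set (V1 \<union> V2)) = mu + nu"
    using fin disj mu nu by (simp add: mset_set_Union)
  then have "psum_part (mu + nu) = colouring_sf (V1 \<union> V2) w"
    using assms fin psum_part_eq_colouring_sf[of "V1 \<union> V2" w]
    by (simp add: is_partition_def)
  also have "\<dots> = sf_mult (colouring_sf V1 w) (colouring_sf V2 w)"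
    using assms fin disj mu nu
    by (intro colouring_sf_union) (auto simp: is_partition_def intro!: gr0I)
  also have "colouring_sf V1 w = psum_part mu"
    using psum_part_eq_colouring_sf[of V1 w] fin mu assms by simp
  also have "colouring_sf V2 w = psum_part nu"
    using psum_part_eq_colouring_sf[of V2 w] fin nu assms by simp
  finally show ?thesis .
qed

lemma sf_mult_lincomb_psum_part:
  assumes "finite T" "finite U" "\<forall>x\<in>T. is_partition x" "\<forall>y\<in>U. is_partition y"
  shows "sf_mult (lincomb d psum_part T) (lincomb e psum_part U)
    = lincomb (\<lambda>nu. \<Sum>p\<in>{p\<in>T \<times> U. fst p + snd p = nu}. d (fst p) * e (snd p)) psum_part
        ((\<lambda>p. fst p + snd p) ` (T \<times> U))"
proof -
  have "sf_mult (lincomb d psum_part T) (lincomb e psum_part U)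
      = (\<lambda>a. \<Sum>x\<in>T. \<Sum>y\<in>U. d x * e y * psum_part (x + y) a)"
    unfolding sf_mult_lincomb[OF assms(1,2)] using assms(3,4) by (simp add: psum_part_add)
  also have "\<dots> = (\<lambda>a. \<Sum>p\<in>T \<times> U. (d (fst p) * e (snd p)) * psum_part (fst p + snd p) a)"
    by (simp add: sum.cartesian_product case_prod_beta)
  also have "\<dots> = lincomb (\<lambda>nu. \<Sum>p\<in>{p\<in>T \<times> U. fst p + snd p = nu}. d (fst p) * e (snd p))
      psum_part ((\<lambda>p. fst p + snd p) ` (T \<times> U))"
    using assms(1,2) by (intro lincomb_group) auto
  finally show ?thesis .
qed

section \<open>Linear independence of the power sums\<close>

text \<open>The monomial \<open>x\<^sub>0\<^bsup>\<mu>\<^sub>1\<^esup> x\<^sub>1\<^bsup>\<mu>\<^sub>2\<^esup> \<cdots>\<close>: among the \<open>p\<^sub>\<nu>\<close> with at most as many parts as \<open>\<mu>\<close>, only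
  \<open>p\<^sub>\<mu>\<close> contains it.\<close>

definition partition_monomial :: "nat multiset \<Rightarrow> mono" where
  "partition_monomial mu = weight_monomial {..<size mu} (nth (sorted_list_of_multiset mu)) id"

lemma positive_nth_sorted_list_of_multiset:
  "is_partition mu \<Longrightarrow> \<forall>u\<in>{..<size mu}. 0 < sorted_list_of_multiset mu ! u"
  by (metis is_partition_def gr0I lessThan_iff mset_sorted_list_of_multiset nth_mem
      set_mset_mset size_mset)

lemma psum_part_partition_monomial_nonzero:
  assumes "is_partition mu"
  shows "psum_part mu (partition_monomial mu) \<noteq> 0"
proof -
  let ?w = "nth (sorted_list_of_multiset mu)"
  have pos: "\<forall>u\<in>{..<size mu}. 0 < ?w u"
    using assms by (rule positive_nth_sorted_list_of_multiset)
  have "restrict id {..<size mu} \<in> weighted_colourings {..<size mu} ?w (partition_monomial mu)"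
    by (simp add: weighted_colourings_def partition_monomial_def)
  then have "colouring_sf {..<size mu} ?w (partition_monomial mu) \<noteq> 0"
    using finite_weighted_colourings[OF _ pos] by (auto simp: colouring_sf_def)
  then show ?thesis
    using psum_part_eq_colouring_sf[of "{..<size mu}" ?w] assms
    by (simp add: image_mset_nth_sorted_list_of_multiset)
qed

lemma psum_part_partition_monomial_eq:
  assumes mu: "is_partition mu" and nu: "is_partition nu" and "size nu \<le> size mu"
    and "psum_part nu (partition_monomial mu) \<noteq> 0"
  shows "nu = mu"
proof -
  let ?a = "partition_monomial mu"
  let ?V = "{..<size nu}" and ?w = "nth (sorted_list_of_multiset nu)"
  have pos: "\<forall>u\<in>?V. 0 < ?w u"
    using nu by (rule positive_nth_sorted_list_of_multiset)
  have "colouring_sf ?V ?w ?a \<noteq> 0"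
    using assms psum_part_eq_colouring_sf[of ?V ?w]
    by (simp add: image_mset_nth_sorted_list_of_multiset)
  then have "weighted_colourings ?V ?w ?a \<noteq> {}"
    by (auto simp: colouring_sf_def)
  then obtain f where "f \<in> weighted_colourings ?V ?w ?a"
    by blast
  then have f: "weight_monomial ?V ?w f = ?a"
    by (simp add: weighted_colourings_def)
  have keys_mu: "Poly_Mapping.keys ?a = {..<size mu}"
    using keys_weight_monomial[OF _ positive_nth_sorted_list_of_multiset[OF mu]]
    by (simp add: partition_monomial_def)
  have image_f: "f ` ?V = {..<size mu}"
    using keys_weight_monomial[OF _ pos, of f] f keys_mu by simp
  then have "card ?V = card (f ` ?V)"
    using \<open>size nu \<le> size mu\<close> card_image_le[of ?V f] by simp
  then have inj: "inj_on f ?V"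
    by (simp add: eq_card_imp_inj_on)
  have "nu = image_mset ?w (mset_set ?V)"
    by (simp add: image_mset_nth_sorted_list_of_multiset)
  also have "\<dots> = image_mset (Poly_Mapping.lookup ?a \<circ> f) (mset_set ?V)"
  proof (rule image_mset_cong)
    fix u assume "u \<in># mset_set ?V"
    then show "?w u = (Poly_Mapping.lookup ?a \<circ> f) u"
      using lookup_weight_monomial_inj[of ?V f u ?w] inj f by simp
  qed
  also have "\<dots> = image_mset (Poly_Mapping.lookup ?a) (mset_set {..<size mu})"
    using inj image_f by (simp flip: image_mset.compositionality add: image_mset_mset_set)
  also have "\<dots> = image_mset (nth (sorted_list_of_multiset mu)) (mset_set {..<size mu})"
    using lookup_weight_monomial_inj[of "{..<size mu}" id]
    by (intro image_mset_cong) (simp add: partition_monomial_def)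
  also have "\<dots> = mu"
    by (rule image_mset_nth_sorted_list_of_multiset)
  finally show ?thesis .
qed

lemma lin_independent_psum_part:
  assumes fin: "finite S" and parts: "\<forall>mu\<in>S. is_partition mu"
  shows "lin_independent psum_part S"
  unfolding lin_independent_def
proof (intro allI impI, rule ccontr)
  fix c assume zero: "lincomb c psum_part S = (\<lambda>_. 0)" and "\<not> (\<forall>mu\<in>S. c mu = 0)"
  then have "{mu\<in>S. c mu \<noteq> 0} \<noteq> {}" by blast
  then obtain mu0 where mu0: "mu0 \<in> {mu\<in>S. c mu \<noteq> 0}"
    and longest: "\<forall>mu\<in>{mu\<in>S. c mu \<noteq> 0}. size mu \<le> size mu0"
    using ex_max_rank[of "{mu\<in>S. c mu \<noteq> 0}" size] fin by auto
  have others: "c mu * psum_part mu (partition_monomial mu0) = 0" if mu: "mu \<in> S - {mu0}" for mu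
  proof (cases "c mu = 0")
    case False
    then have "psum_part mu (partition_monomial mu0) = 0"
      using mu mu0 parts longest psum_part_partition_monomial_eq[of mu0 mu] by auto
    then show ?thesis by simp
  qed simp
  have "lincomb c psum_part S (partition_monomial mu0)
      = c mu0 * psum_part mu0 (partition_monomial mu0)
        + (\<Sum>mu\<in>S - {mu0}. c mu * psum_part mu (partition_monomial mu0))"
    unfolding lincomb_def using fin mu0 by (intro sum.remove) simp_all
  also have "(\<Sum>mu\<in>S - {mu0}. c mu * psum_part mu (partition_monomial mu0)) = 0"
    using others by (intro sum.neutral) blast
  finally show False
    using zero mu0 parts psum_part_partition_monomial_nonzero[of mu0] by simp
qed

lemma lincomb_psum_part_eq_imp_coeff_eq:
  assumes "finite S" "finite S'" "\<forall>mu\<in>S \<union> S'. is_partition mu"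
    and "lincomb c psum_part S = lincomb c' psum_part S'"
  shows "\<forall>mu\<in>S \<union> S'. (if mu \<in> S then c mu else 0) = (if mu \<in> S' then c' mu else 0)"
proof -
  let ?U = "S \<union> S'"
  have "lincomb (\<lambda>i. (if i \<in> S then c i else 0) - (if i \<in> S' then c' i else 0)) psum_part ?U
      = (\<lambda>_. 0)"
    unfolding lincomb_diff using assms
    by (simp flip: lincomb_zero_extend[of ?U S c] lincomb_zero_extend[of ?U S' c'])
  then have "\<forall>mu\<in>?U. (if mu \<in> S then c mu else 0) - (if mu \<in> S' then c' mu else 0) = 0"
    using lin_independent_psum_part[of ?U] assms unfolding lin_independent_def by blast
  then show ?thesis by simp
qed

lemma omega_lincomb_psum_part:
  assumes fin: "finite S" and parts: "\<forall>mu\<in>S. is_partition mu"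
  shows "omega (lincomb c psum_part S) = lincomb (\<lambda>la. c la * eps_part la) psum_part S"
  unfolding omega_def
proof (rule the_equality)
  fix g assume "\<exists>S' c'. finite S' \<and> (\<forall>la\<in>S'. is_partition la) \<and>
      lincomb c psum_part S = lincomb c' psum_part S' \<and>
      g = lincomb (\<lambda>la. c' la * eps_part la) psum_part S'"
  then obtain S' c' where S': "finite S'" "\<forall>la\<in>S'. is_partition la"
    and eq: "lincomb c psum_part S = lincomb c' psum_part S'"
    and g: "g = lincomb (\<lambda>la. c' la * eps_part la) psum_part S'" by blast
  let ?U = "S \<union> S'"
  have coeff: "\<forall>mu\<in>?U. (if mu \<in> S then c mu else 0) = (if mu \<in> S' then c' mu else 0)"
    using lincomb_psum_part_eq_imp_coeff_eq[OF fin S'(1) _ eq] parts S'(2) by blast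
  have "g = lincomb (\<lambda>i. if i \<in> S' then c' i * eps_part i else 0) psum_part ?U"
    unfolding g using S' fin by (intro lincomb_zero_extend) auto
  also have "\<dots> = lincomb (\<lambda>i. if i \<in> S then c i * eps_part i else 0) psum_part ?U"
    unfolding lincomb_def using coeff by (intro ext sum.cong refl) (auto split: if_splits)
  also have "\<dots> = lincomb (\<lambda>la. c la * eps_part la) psum_part S"
    using S' fin by (intro lincomb_zero_extend[symmetric]) auto
  finally show "g = lincomb (\<lambda>la. c la * eps_part la) psum_part S" .
qed (use assms in blast)

lemma eps_part_cases: "eps_part mu = 1 \<or> eps_part mu = -1"
  by (induction mu) (auto simp: eps_part_def minus_one_power_iff)

lemma Ysf_eq_lincomb_eps_one:
  assumes "chrom G = lincomb c psum_part S" "finite S" "\<forall>mu\<in>S. is_partition mu"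
  shows "Ysf G = lincomb c psum_part {mu\<in>S. eps_part mu = 1}"
proof
  fix a
  have "Ysf G a = (\<Sum>mu\<in>S. c mu * ((1 + eps_part mu) / 2) * psum_part mu a)"
    using assms omega_lincomb_psum_part[of S c]
    by (simp add: Ysf_def lincomb_def sum_divide_distrib[symmetric] sum.distrib[symmetric] algebra_simps)
  also have "\<dots> = (\<Sum>mu\<in>{mu\<in>S. eps_part mu = 1}. c mu * psum_part mu a)"
    using assms(2) eps_part_cases by (intro sum.mono_neutral_cong_right) (auto, metis add.right_inverse)
  finally show "Ysf G a = lincomb c psum_part {mu\<in>S. eps_part mu = 1} a"
    by (simp add: lincomb_def)
qed

section \<open>Chromatic symmetric functions of stars and of the triangle\<close>

lemma prod_of_bool: "finite A \<Longrightarrow> (\<Prod>i\<in>A. of_bool (Q i)) = (of_bool (\<forall>i\<in>A. Q i) :: 'b::comm_semiring_1)"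
  by (induction A rule: finite_induct) auto

lemma card_avoiding_inclusion_exclusion:
  fixes P :: "'i \<Rightarrow> 'a \<Rightarrow> bool"
  assumes "finite I" "finite X"
  shows "(of_nat (card {x\<in>X. \<forall>i\<in>I. \<not> P i x}) :: 'b::comm_ring_1)
    = (\<Sum>J\<in>Pow I. (-1) ^ card J * of_nat (card {x\<in>X. \<forall>i\<in>J. P i x}))"
proof -
  have "(of_nat (card {x\<in>X. \<forall>i\<in>I. \<not> P i x}) :: 'b) = (\<Sum>x\<in>X. \<Prod>i\<in>I. 1 - of_bool (P i x))"
    using assms by (simp add: prod_of_bool Collect_conj_eq flip: of_bool_not_iff)
  also have "\<dots> = (\<Sum>x\<in>X. \<Sum>J\<in>Pow I. (-1) ^ card J * (\<Prod>i\<in>J. of_bool (P i x)))"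
    using assms by (simp add: prod_diff_conv_sum)
  also have "\<dots> = (\<Sum>J\<in>Pow I. (-1) ^ card J * (\<Sum>x\<in>X. of_bool (\<forall>i\<in>J. P i x)))"
    using assms by (subst sum.swap) (simp add: sum_distrib_left prod_of_bool finite_subset mult.commute)
  also have "\<dots> = (\<Sum>J\<in>Pow I. (-1) ^ card J * of_nat (card {x\<in>X. \<forall>i\<in>J. P i x}))"
    using assms by (simp add: Collect_conj_eq)
  finally show ?thesis .
qed

lemma lookup_weight_monomial_one:
  "finite V \<Longrightarrow> Poly_Mapping.lookup (weight_monomial V (\<lambda>_. 1) f) i = card {u\<in>V. f u = i}"
  by (simp add: lookup_weight_monomial sum.inter_filter[symmetric])

lemma chrom_eq_card_proper_colourings:
  assumes "finite (fst G)"
  shows "chrom G a = of_nat (card {f \<in> weighted_colourings (fst G) (\<lambda>_. 1) a. proper_colouring G f})"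
proof -
  have "{k \<in> fst G \<rightarrow>\<^sub>E UNIV. proper_colouring G k \<and>
      (\<forall>i. card {v \<in> fst G. k v = i} = Poly_Mapping.lookup a i)}
    = {f \<in> weighted_colourings (fst G) (\<lambda>_. 1) a. proper_colouring G f}"
    unfolding weighted_colourings_def poly_mapping_eq_iff
    using lookup_weight_monomial_one[OF assms] by (auto simp: fun_eq_iff)
  then show ?thesis by (simp add: chrom_def)
qed

lemma weight_monomial_constant_on:
  assumes "finite V" "c0 \<in> V" "J \<subseteq> V - {c0}" "\<forall>v\<in>J. f v = f c0"
  shows "weight_monomial V (\<lambda>_. 1) f
    = weight_monomial (V - J) (\<lambda>u. if u = c0 then card J + 1 else 1) f"
proof (rule poly_mapping_eqI)
  fix j
  let ?K = "insert c0 J"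
  let ?g = "\<lambda>u. if f u = j then if u = c0 then card J + 1 else 1 else 0"
  have fin: "finite J" "finite (V - ?K)"
    using assms(1,3) by (auto intro: finite_subset)
  have c0: "c0 \<notin> J"
    using assms(3) by blast
  have "(\<Sum>u\<in>V. if f u = j then 1 else 0) = (\<Sum>u\<in>V - ?K. if f u = j then 1 else 0)
      + (\<Sum>u\<in>?K. if f u = j then 1 else 0)"
    using assms by (intro sum.subset_diff) auto
  also have "(\<Sum>u\<in>?K. if f u = j then 1 else 0) = (\<Sum>u\<in>?K. if f c0 = j then 1 else 0 :: nat)"
    using assms(4) by (intro sum.cong) auto
  also have "\<dots> = (if f c0 = j then card J + 1 else 0)"
    using fin c0 by simp
  also have "(\<Sum>u\<in>V - ?K. if f u = j then 1 else 0) = (\<Sum>u\<in>V - ?K. ?g u)"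
    by (intro sum.cong refl) simp
  also have "(\<Sum>u\<in>V - ?K. ?g u) + (if f c0 = j then card J + 1 else 0) = (\<Sum>u\<in>V - J. ?g u)"
  proof -
    have "(\<Sum>u\<in>V - J. ?g u) = ?g c0 + (\<Sum>u\<in>V - J - {c0}. ?g u)"
      using assms fin by (intro sum.remove) auto
    moreover have "V - J - {c0} = V - ?K"
      by blast
    ultimately show ?thesis
      by (simp add: add.commute)
  qed
  finally show "Poly_Mapping.lookup (weight_monomial V (\<lambda>_. 1) f) j
      = Poly_Mapping.lookup (weight_monomial (V - J) (\<lambda>u. if u = c0 then card J + 1 else 1) f) j"
    by (simp only: lookup_weight_monomial)
qed

definition hook :: "nat \<Rightarrow> nat \<Rightarrow> nat multiset" where
  "hook h n = add_mset h (replicate_mset n 1)"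

lemma image_mset_merged_weights:
  assumes "finite V" "c0 \<in> V" "J \<subseteq> V - {c0}"
  shows "image_mset (\<lambda>u. if u = c0 then card J + 1 else 1) (mset_set (V - J))
    = hook (card J + 1) (card V - card J - 1)"
proof -
  have "mset_set (V - J) = add_mset c0 (mset_set (V - J - {c0}))"
    using assms by (intro mset_set.remove) auto
  moreover have "card (V - J - {c0}) = card V - card J - 1"
  proof -
    have "finite J" "J \<subseteq> V" "c0 \<in> V - J"
      using assms by (auto intro: finite_subset)
    then show ?thesis
      by (simp add: card_Diff_subset card_Diff_singleton)
  qed
  moreover have "image_mset (\<lambda>u. if u = c0 then card J + 1 else 1) (mset_set (V - J - {c0}))
      = image_mset (\<lambda>_. 1) (mset_set (V - J - {c0}))"
    using assms by (intro image_mset_cong) auto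
  ultimately show ?thesis
    by (simp add: hook_def image_mset_const_eq)
qed

text \<open>Merging the vertices of \<open>J\<close> into \<open>c0\<close> turns the colourings that are constant on
  \<open>insert c0 J\<close> into the colourings of \<open>V - J\<close> in which \<open>c0\<close> has weight \<open>card J + 1\<close>.\<close>

lemma bij_betw_colourings_constant_on:
  assumes V: "finite V" and c0: "c0 \<in> V" and J: "J \<subseteq> V - {c0}"
  shows "bij_betw (\<lambda>f. restrict f (V - J)) {f \<in> weighted_colourings V (\<lambda>_. 1) a. \<forall>v\<in>J. f v = f c0}
    (weighted_colourings (V - J) (\<lambda>u. if u = c0 then card J + 1 else 1) a)"
    (is "bij_betw _ ?A (weighted_colourings _ ?w _)")
proof -
  define extend where "extend g = (\<lambda>v. if v \<in> J then g c0 else g v)" for g :: "nat \<Rightarrow> nat"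
  have merge: "weight_monomial V (\<lambda>_. 1) f = weight_monomial (V - J) ?w f"
    if "\<forall>v\<in>J. f v = f c0" for f
    using weight_monomial_constant_on[OF V c0 J that] .
  have extend_weight: "weight_monomial (V - J) ?w (extend g) = weight_monomial (V - J) ?w g" for g
    by (rule weight_monomial_cong) (auto simp: extend_def)
  show ?thesis
  proof (rule bij_betw_byWitness[where f' = extend])
    show "\<forall>f\<in>?A. extend (restrict f (V - J)) = f"
    proof (intro ballI ext)
      fix f v assume "f \<in> ?A"
      then have f: "f \<in> V \<rightarrow>\<^sub>E UNIV" "\<forall>v\<in>J. f v = f c0"
        by (simp_all add: weighted_colourings_def)
      have "c0 \<in> V - J"
        using c0 J by blast
      then show "extend (restrict f (V - J)) v = f v"
        using f PiE_arb[OF f(1), of v] by (simp add: extend_def)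
    qed
    show "\<forall>g\<in>weighted_colourings (V - J) ?w a. restrict (extend g) (V - J) = g"
      by (auto simp: extend_def weighted_colourings_def PiE_def extensional_def fun_eq_iff)
    show "(\<lambda>f. restrict f (V - J)) ` ?A \<subseteq> weighted_colourings (V - J) ?w a"
      using merge by (auto simp: weighted_colourings_def)
    have "extend g \<in> ?A" if "g \<in> weighted_colourings (V - J) ?w a" for g
    proof -
      have "\<forall>v\<in>J. extend g v = extend g c0"
        using J by (auto simp: extend_def)
      moreover have "extend g \<in> V \<rightarrow>\<^sub>E UNIV"
        using that J by (auto simp: extend_def weighted_colourings_def PiE_def extensional_def)
      ultimately show ?thesis
        using that merge[of "extend g"] extend_weight by (auto simp: weighted_colourings_def)
    qed
    then show "extend ` weighted_colourings (V - J) ?w a \<subseteq> ?A"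
      by blast
  qed
qed

lemma card_colourings_constant_on:
  assumes V: "finite V" and c0: "c0 \<in> V" and J: "J \<subseteq> V - {c0}"
  shows "of_nat (card {f \<in> weighted_colourings V (\<lambda>_. 1) a. \<forall>v\<in>J. f v = f c0})
    = psum_part (hook (card J + 1) (card V - card J - 1)) a"
proof -
  let ?w = "\<lambda>u. if u = c0 then card J + 1 else 1"
  have "of_nat (card {f \<in> weighted_colourings V (\<lambda>_. 1) a. \<forall>v\<in>J. f v = f c0})
      = colouring_sf (V - J) ?w a"
    using bij_betw_same_card[OF bij_betw_colourings_constant_on[OF assms, of a]]
    by (simp add: colouring_sf_def)
  also have "\<dots> = psum_part (hook (card J + 1) (card V - card J - 1)) a"
    using psum_part_eq_colouring_sf[of "V - J" ?w] image_mset_merged_weights[OF V c0 J] V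
    by (simp add: hook_def is_partition_def)
  finally show ?thesis .
qed

lemma proper_colouring_star: "proper_colouring (star k) f \<longleftrightarrow> (\<forall>v\<in>{1..<k}. f v \<noteq> f 0)"
  unfolding proper_colouring_def star_def fst_conv snd_conv
proof (intro iffI ballI impI)
  fix v assume proper: "\<forall>u\<in>{0..<k}. \<forall>w\<in>{0..<k}. u = 0 \<and> w \<noteq> 0 \<or> w = 0 \<and> u \<noteq> 0 \<longrightarrow> f u \<noteq> f w"
    and v: "v \<in> {1..<k}"
  show "f v \<noteq> f 0"
    using proper[rule_format, of v 0] v by simp
next
  fix u w assume "\<forall>v\<in>{1..<k}. f v \<noteq> f 0" and "u \<in> {0..<k}" "w \<in> {0..<k}"
    and "u = 0 \<and> w \<noteq> 0 \<or> w = 0 \<and> u \<noteq> 0"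
  then show "f u \<noteq> f w"
    by (metis atLeastLessThan_iff less_one not_le)
qed

lemma chrom_star:
  assumes "1 \<le> k"
  shows "chrom (star k)
    = (\<lambda>a. \<Sum>J\<in>Pow {1..<k}. (-1) ^ card J * psum_part (hook (card J + 1) (k - 1 - card J)) a)"
proof
  fix a
  let ?C = "weighted_colourings {0..<k} (\<lambda>_. 1) a"
  have "fst (star k) = {0..<k}"
    by (simp add: star_def)
  then have "chrom (star k) a = of_nat (card {f \<in> ?C. \<forall>v\<in>{1..<k}. \<not> f v = f 0})"
    using chrom_eq_card_proper_colourings[of "star k" a] by (simp add: proper_colouring_star)
  also have "\<dots> = (\<Sum>J\<in>Pow {1..<k}. (-1) ^ card J * of_nat (card {f \<in> ?C. \<forall>v\<in>J. f v = f 0}))"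
    by (intro card_avoiding_inclusion_exclusion finite_weighted_colourings) auto
  also have "\<dots> = (\<Sum>J\<in>Pow {1..<k}. (-1) ^ card J * psum_part (hook (card J + 1) (k - 1 - card J)) a)"
    using assms by (intro sum.cong refl) (subst card_colourings_constant_on; auto)
  finally show "chrom (star k) a
      = (\<Sum>J\<in>Pow {1..<k}. (-1) ^ card J * psum_part (hook (card J + 1) (k - 1 - card J)) a)" .
qed

lemma chrom_cycle3:
  "chrom cycle3 a = chrom (star 3) a - psum_part (hook 2 1) a + psum_part (hook 3 0) a"
proof -
  let ?V = "{0..<3 :: nat}"
  let ?C = "weighted_colourings ?V (\<lambda>_. 1) a"
  let ?B = "{f \<in> ?C. f 1 \<noteq> f 0 \<and> f 2 \<noteq> f 0 \<and> f 1 = f 2}"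
  have fin: "finite ?C"
    by (intro finite_weighted_colourings) auto
  have V: "fst cycle3 = ?V" "fst (star 3) = ?V" "{1..<3 :: nat} = {1, 2}"
    by (auto simp: cycle3_def star_def)
  have cycle: "chrom cycle3 a = of_nat (card {f \<in> ?C. f 1 \<noteq> f 0 \<and> f 2 \<noteq> f 0 \<and> f 1 \<noteq> f 2})"
    using chrom_eq_card_proper_colourings[of cycle3 a] V
    by (simp add: proper_colouring_def cycle3_def) (metis (lifting))
  have star: "chrom (star 3) a = of_nat (card {f \<in> ?C. f 1 \<noteq> f 0 \<and> f 2 \<noteq> f 0})"
    using chrom_eq_card_proper_colourings[of "star 3" a] V by (simp add: proper_colouring_star)
  \<comment> \<open>The colourings in \<open>?B\<close> are those constant on \<open>{1, 2}\<close> but not on \<open>{0, 1, 2}\<close>.\<close>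
  have "card {f \<in> ?C. f 1 \<noteq> f 0 \<and> f 2 \<noteq> f 0}
      = card {f \<in> ?C. f 1 \<noteq> f 0 \<and> f 2 \<noteq> f 0 \<and> f 1 \<noteq> f 2} + card ?B"
    using fin by (subst card_Un_disjoint[symmetric]) (auto intro: arg_cong[where f = card])
  moreover have "card {f \<in> ?C. \<forall>v\<in>{2}. f v = f 1}
      = card ?B + card {f \<in> ?C. \<forall>v\<in>{1, 2}. f v = f 0}"
    using fin by (subst card_Un_disjoint[symmetric]) (auto intro: arg_cong[where f = card])
  moreover have "of_nat (card {f \<in> ?C. \<forall>v\<in>{2}. f v = f 1}) = psum_part (hook 2 1) a"
    using card_colourings_constant_on[of ?V 1 "{2}" a] by (simp add: numeral_eq_Suc)
  moreover have "of_nat (card {f \<in> ?C. \<forall>v\<in>{1, 2}. f v = f 0}) = psum_part (hook 3 0) a"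
    using card_colourings_constant_on[of ?V 0 "{1, 2}" a] by (simp add: numeral_eq_Suc)
  ultimately show ?thesis
    unfolding cycle star by simp
qed

definition hooks :: "nat \<Rightarrow> nat multiset set" where
  "hooks r = {hook h (r - h) | h. 0 < h \<and> h \<le> r}"

lemma finite_hooks: "finite (hooks r)"
  unfolding hooks_def by (rule finite_image_set) simp

lemma hook_singleton: "hook r 0 = {#r#}"
  by (simp add: hook_def)

lemma size_hook: "size (hook h n) = Suc n"
  by (simp add: hook_def)

lemma eps_part_hook: "eps_part (hook h n) = (-1) ^ (h - 1)"
  by (simp add: hook_def eps_part_def)

lemma is_partition_hook: "0 < h \<Longrightarrow> is_partition (hook h n)"
  by (simp add: hook_def is_partition_def)

lemma hook_in_OP: "0 < h \<Longrightarrow> odd h \<Longrightarrow> hook h n \<in> OP (h + n)"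
  by (simp add: hook_def OP_def is_partition_def)

definition star_coeff :: "nat \<Rightarrow> nat multiset \<Rightarrow> rat" where
  "star_coeff k mu = (\<Sum>J\<in>{J\<in>Pow {1..<k}. hook (card J + 1) (k - 1 - card J) = mu}. (-1) ^ card J)"

lemma chrom_star_eq_lincomb_hooks:
  assumes "1 \<le> k"
  shows "chrom (star k) = lincomb (star_coeff k) psum_part (hooks k)"
proof -
  have "hook (card J + 1) (k - 1 - card J) \<in> hooks k" if "J \<subseteq> {1..<k}" for J
  proof -
    have "card J \<le> k - 1"
      using card_mono[OF _ that] by simp
    then show ?thesis
      unfolding hooks_def using assms by (intro CollectI exI[of _ "card J + 1"]) simp
  qed
  then show ?thesis
    unfolding chrom_star[OF assms] star_coeff_def by (intro lincomb_group finite_hooks) auto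
qed

lemma star_coeff_singleton:
  assumes "1 \<le> k"
  shows "star_coeff k {#k#} = (-1) ^ (k - 1)"
proof -
  have "{J\<in>Pow {1..<k}. hook (card J + 1) (k - 1 - card J) = {#k#}} = {{1..<k}}"
  proof (intro equalityI subsetI)
    fix J assume "J \<in> {J\<in>Pow {1..<k}. hook (card J + 1) (k - 1 - card J) = {#k#}}"
    then have J: "J \<subseteq> {1..<k}" and "size (hook (card J + 1) (k - 1 - card J)) = 1"
      by auto
    then have "card J = card {1..<k}"
      using card_mono[OF _ J] by (simp add: size_hook)
    then show "J \<in> {{1..<k}}"
      using J by (simp add: card_subset_eq)
  qed (use assms in \<open>auto simp: hook_def\<close>)
  then show ?thesis
    by (simp add: star_coeff_def)
qed

section \<open>Leading terms and triangularity\<close>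

definition has_psum_leading_term :: "sf \<Rightarrow> nat multiset \<Rightarrow> bool" where
  "has_psum_leading_term F la \<longleftrightarrow> (\<exists>T d. finite T \<and> T \<subseteq> OP (sum_mset la) \<and> la \<in> T \<and> d la \<noteq> 0 \<and>
      (\<forall>mu\<in>T - {la}. size la < size mu) \<and> F = lincomb d psum_part T)"

lemma has_psum_leading_termE:
  assumes "has_psum_leading_term F la"
  obtains T d where "finite T" "T \<subseteq> OP (sum_mset la)" "la \<in> T" "d la \<noteq> 0"
    "\<forall>mu\<in>T - {la}. size la < size mu" "F = lincomb d psum_part T"
  using assms unfolding has_psum_leading_term_def by (elim exE conjE) (rule that; assumption)

lemma has_psum_leading_term_Ysf_hooks:
  assumes chrom: "chrom G = lincomb c psum_part (hooks r)" and "odd r" and "c {#r#} \<noteq> 0"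
  shows "has_psum_leading_term (Ysf G) {#r#}"
proof -
  let ?T = "{mu \<in> hooks r. eps_part mu = 1}"
  have T: "?T = {hook h (r - h) | h. 0 < h \<and> h \<le> r \<and> odd h}"
    by (auto simp: hooks_def eps_part_hook minus_one_power_iff)
  have Y: "Ysf G = lincomb c psum_part ?T"
    using chrom finite_hooks by (rule Ysf_eq_lincomb_eps_one) (auto simp: hooks_def is_partition_hook)
  have sub: "?T \<subseteq> OP r"
  proof
    fix mu assume "mu \<in> ?T"
    then obtain h where "mu = hook h (r - h)" "0 < h" "h \<le> r" "odd h"
      unfolding T by blast
    then show "mu \<in> OP r"
      using hook_in_OP[of h "r - h"] by simp
  qed
  have top: "{#r#} \<in> ?T"
    unfolding T using \<open>odd r\<close> by (auto simp flip: hook_singleton intro!: exI[of _ r] odd_pos)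
  have longer: "\<forall>mu\<in>?T - {{#r#}}. size {#r#} < size mu"
    unfolding T by (auto simp: size_hook hook_singleton[symmetric])
  show ?thesis
    unfolding has_psum_leading_term_def
    using finite_hooks[of r] sub top \<open>c {#r#} \<noteq> 0\<close> longer Y by (intro exI[of _ ?T] exI[of _ c]) simp
qed

lemma has_psum_leading_term_Ysf_star:
  assumes "odd k"
  shows "has_psum_leading_term (Ysf (star k)) {#k#}"
proof -
  have "1 \<le> k"
    using assms by presburger
  then show ?thesis
    using assms chrom_star_eq_lincomb_hooks star_coeff_singleton
    by (intro has_psum_leading_term_Ysf_hooks) auto
qed

lemma has_psum_leading_term_Ysf_cycle3: "has_psum_leading_term (Ysf cycle3) {#3#}"
proof -
  let ?c = "\<lambda>mu. star_coeff 3 mu - of_bool (mu = hook 2 1) + of_bool (mu = hook 3 0)"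
  have hooks: "hook 2 1 \<in> hooks 3" "hook 3 0 \<in> hooks 3"
    unfolding hooks_def by (intro CollectI exI[of _ 2], simp) (intro CollectI exI[of _ 3], simp)
  have "lincomb ?c psum_part (hooks 3) = (\<lambda>a. lincomb (star_coeff 3) psum_part (hooks 3) a
      - psum_part (hook 2 1) a + psum_part (hook 3 0) a)"
    by (simp only: lincomb_add lincomb_diff lincomb_indicator[OF finite_hooks hooks(1)]
        lincomb_indicator[OF finite_hooks hooks(2)])
  also have "\<dots> = chrom cycle3"
    using chrom_cycle3 chrom_star_eq_lincomb_hooks[of 3] by (simp add: fun_eq_iff)
  finally have "chrom cycle3 = lincomb ?c psum_part (hooks 3)" ..
  moreover have "?c {#3#} = 2"
    using star_coeff_singleton[of 3] by (simp add: hook_def)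
  ultimately show ?thesis
    by (intro has_psum_leading_term_Ysf_hooks) (auto simp: hook_singleton)
qed

lemma OP_add: "x \<in> OP m \<Longrightarrow> y \<in> OP k \<Longrightarrow> x + y \<in> OP (m + k)"
  by (auto simp: OP_def is_partition_def)

lemma has_psum_leading_term_mult:
  assumes "has_psum_leading_term F la" "has_psum_leading_term G mu"
  shows "has_psum_leading_term (sf_mult F G) (la + mu)"
proof -
  obtain T d where T: "finite T" "T \<subseteq> OP (sum_mset la)" "la \<in> T" "d la \<noteq> 0"
    and longer_T: "\<forall>x\<in>T - {la}. size la < size x" and F: "F = lincomb d psum_part T"
    using assms(1) by (rule has_psum_leading_termE)
  obtain U e where U: "finite U" "U \<subseteq> OP (sum_mset mu)" "mu \<in> U" "e mu \<noteq> 0"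
    and longer_U: "\<forall>y\<in>U - {mu}. size mu < size y" and G: "G = lincomb e psum_part U"
    using assms(2) by (rule has_psum_leading_termE)
  let ?g = "\<lambda>p :: nat multiset \<times> nat multiset. fst p + snd p"
  let ?c = "\<lambda>nu. \<Sum>p\<in>{p\<in>T \<times> U. ?g p = nu}. d (fst p) * e (snd p)"
  have prod: "sf_mult F G = lincomb ?c psum_part (?g ` (T \<times> U))"
    unfolding F G using T(1,2) U(1,2) by (intro sf_mult_lincomb_psum_part) (auto simp: OP_def)
  have minimal: "x = la \<and> y = mu" if "x \<in> T" "y \<in> U" "size (x + y) \<le> size (la + mu)" for x y
  proof -
    have "x = la \<or> size la < size x" "y = mu \<or> size mu < size y"
      using that(1,2) longer_T longer_U by blast+
    then show ?thesis
      using that(3) by auto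
  qed
  have "{p\<in>T \<times> U. ?g p = la + mu} = {(la, mu)}"
    using minimal T(3) U(3) by fastforce
  then have top: "?c (la + mu) = d la * e mu"
    by simp
  have longer: "\<forall>nu\<in>?g ` (T \<times> U) - {la + mu}. size (la + mu) < size nu"
    using minimal by fastforce
  have "?g ` (T \<times> U) \<subseteq> OP (sum_mset (la + mu))"
    using T(2) U(2) by (auto intro!: OP_add)
  moreover have "la + mu \<in> ?g ` (T \<times> U)"
    using T(3) U(3) by (intro image_eqI[of _ _ "(la, mu)"]) auto
  ultimately show ?thesis
    unfolding has_psum_leading_term_def prod using T U top longer
    by (intro exI[of _ "?g ` (T \<times> U)"] exI[of _ ?c]) auto
qed

lemma has_psum_leading_term_one: "has_psum_leading_term sf_one {#}"
  unfolding has_psum_leading_term_def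
  by (intro exI[of _ "{{#}}"] exI[of _ "\<lambda>_. 1"])
    (auto simp: OP_def is_partition_def lincomb_def psum_part_def sf_prod_list_def)

lemma has_psum_leading_term_Yfam:
  assumes "\<forall>r. odd r \<longrightarrow> has_psum_leading_term (Ysf (B r)) {#r#}" and "la \<in> OP n"
  shows "has_psum_leading_term (Yfam B la) la"
proof -
  have "\<forall>r\<in>set xs. odd r \<Longrightarrow> has_psum_leading_term (sf_prod_list (map (\<lambda>r. Ysf (B r)) xs)) (mset xs)"
    for xs
    using assms(1)
    by (induction xs) (auto simp: sf_prod_list_def has_psum_leading_term_one
        intro!: has_psum_leading_term_mult[where la = "{#_#}", simplified])
  from this[of "sorted_list_of_multiset la"] show ?thesis
    using assms(2) by (simp add: Yfam_def OP_def)
qed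

lemma size_le_sum_mset: "is_partition la \<Longrightarrow> size la \<le> sum_mset la"
  by (induction la) (auto simp: is_partition_def Suc_le_eq)

lemma finite_OP: "finite (OP n)"
proof -
  have "OP n \<subseteq> (\<Union>s\<le>n. multisets_of_size {1..n} s)"
  proof
    fix la assume "la \<in> OP n"
    then have part: "is_partition la" and sum: "sum_mset la = n"
      by (simp_all add: OP_def)
    have "x \<in> {1..n}" if "x \<in># la" for x
    proof -
      have "0 < x"
        using part that by (metis gr0I is_partition_def)
      moreover have "x \<le> n"
        using sum sum_mset.remove[OF that] by simp
      ultimately show ?thesis by simp
    qed
    moreover have "size la \<le> n"
      using size_le_sum_mset[OF part] sum by simp
    ultimately show "la \<in> (\<Union>s\<le>n. multisets_of_size {1..n} s)"
      unfolding multisets_of_size_def by blast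
  qed
  then show ?thesis
    by (rule finite_subset) auto
qed

lemma is_basis_of_Gamma_iff:
  "is_basis_of_Gamma n b \<longleftrightarrow> lin_independent b (OP n) \<and> lin_span b (OP n) = lin_span psum_part (OP n)"
  by (simp add: is_basis_of_Gamma_def lin_independent_def lin_span_def Gamma_def)

lemma has_psum_leading_term_triangular_row:
  assumes "has_psum_leading_term F la" "la \<in> OP n"
  shows "\<exists>m. F = lincomb m psum_part (OP n) \<and> m la \<noteq> 0 \<and>
    (\<forall>mu\<in>OP n. m mu \<noteq> 0 \<longrightarrow> mu = la \<or> size la < size mu)"
proof -
  obtain T d where T: "finite T" "T \<subseteq> OP (sum_mset la)" "la \<in> T" "d la \<noteq> 0"
    "\<forall>mu\<in>T - {la}. size la < size mu" and F: "F = lincomb d psum_part T"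
    using assms(1) by (rule has_psum_leading_termE)
  have "sum_mset la = n"
    using assms(2) by (simp add: OP_def)
  with T(2) have "T \<subseteq> OP n"
    by simp
  then show ?thesis
    using T finite_OP lincomb_zero_extend[of "OP n" T d psum_part]
    by (intro exI[of _ "\<lambda>mu. if mu \<in> T then d mu else 0"]) (auto simp: F)
qed

lemma is_basis_of_Gamma_if_leading_terms:
  assumes "\<forall>la\<in>OP n. has_psum_leading_term (b la) la"
  shows "is_basis_of_Gamma n b"
proof -
  have "\<forall>la\<in>OP n. \<exists>m. b la = lincomb m psum_part (OP n) \<and> m la \<noteq> 0 \<and>
      (\<forall>mu\<in>OP n. m mu \<noteq> 0 \<longrightarrow> mu = la \<or> size la < size mu)"
    using assms has_psum_leading_term_triangular_row by blast
  then obtain M where M: "\<forall>la\<in>OP n. b la = lincomb (M la) psum_part (OP n)"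
    and diag: "\<forall>la\<in>OP n. M la la \<noteq> 0"
    and upper: "\<forall>la\<in>OP n. \<forall>mu\<in>OP n. M la mu \<noteq> 0 \<longrightarrow> mu = la \<or> size la < size mu"
    by metis
  have "lin_independent psum_part (OP n)"
    by (intro lin_independent_psum_part finite_OP) (simp add: OP_def)
  then have "lin_independent b (OP n)"
    using triangular_lin_independent[OF finite_OP _ M diag upper] by blast
  moreover have "lin_span psum_part (OP n) \<subseteq> lin_span b (OP n)"
    using triangular_lin_span[OF finite_OP M diag upper] .
  moreover have "lin_span b (OP n) \<subseteq> lin_span psum_part (OP n)"
    using finite_OP M by (intro lin_span_subset) (auto simp: lin_span_def)
  ultimately show ?thesis
    unfolding is_basis_of_Gamma_iff by blast
qed

theorem mainTheorem6:
  fixes n :: nat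
  assumes "n \<ge> 1"
  shows "is_basis_of_Gamma n (Yfam B1) \<and> is_basis_of_Gamma n (Yfam B2)"
proof -
  have "\<forall>r. odd r \<longrightarrow> has_psum_leading_term (Ysf (B1 r)) {#r#}"
    by (simp add: B1_def has_psum_leading_term_Ysf_cycle3 has_psum_leading_term_Ysf_star)
  moreover have "\<forall>r. odd r \<longrightarrow> has_psum_leading_term (Ysf (B2 r)) {#r#}"
    by (simp add: B2_def has_psum_leading_term_Ysf_star)
  ultimately show ?thesis
    by (auto intro!: is_basis_of_Gamma_if_leading_terms has_psum_leading_term_Yfam)
qed

end
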